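(* Let $n\ge 1$, let $\mathbf{A}\in\mathbb{R}^{n\times n}$ be symmetric positive semidefinite, $\mathbf{b}\in\mathbb{R}^n$, and let $h(\mathbf{x})=\sum_{i=1}^n \varphi(\mathbf{x}_i)$, where $\varphi:\mathbb{R}\to\mathbb{R}\cup\{+\infty\}$ is proper, lower semicontinuous and convex. Put $f(\mathbf{x})=\tfrac12\mathbf{x}^T\mathbf{A}\mathbf{x}+\mathbf{x}^T\mathbf{b}+h(\mathbf{x})$. Write $\mathbf{A}=\mathbf{L}+\mathbf{D}+\mathbf{L}^T$, where $\mathbf{D}$ is the diagonal part and $\mathbf{L}$ the strictly lower triangular part of $\mathbf{A}$. Fix $\omega\in(0,2)$ and $\theta\in[0,\infty)$ with $\mathbf{D}_{i,i}+\theta>0$ for all $i$. Set $\mathbf{B}=\mathbf{L}+\tfrac1\omega(\mathbf{D}+\theta\mathbf{I})$ and $\mathbf{C}=\mathbf{L}^T+\tfrac1\omega((\omega-1)\mathbf{D}-\theta\mathbf{I})$, so that $\mathbf{A}=\mathbf{B}+\mathbf{C}$. For $\mathbf{x}\in\mathbb{R}^n$ let $\mathcal{T}(\mathbf{x})$ be the unique $\mathbf{z}\in\mathbb{R}^n$ with $\mathbf{0}\in\mathbf{B}\mathbf{z}+\mathbf{b}+\mathbf{C}\mathbf{x}+\partial h(\mathbf{z})$. Then for all $\mathbf{x},\mathbf{y}\in\mathbb{R}^n$: (a) there exists $\mathbf{v}\in\partial h(\mathcal{T}(\mathbf{x}))$ such that $\|\mathbf{A}\mathcal{T}(\mathbf{x})+\mathbf{b}+\mathbf{v}\|\le\|\mathbf{C}\|\,\|\mathbf{x}-\mathcal{T}(\mathbf{x})\|$;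 (b) $f(\mathcal{T}(\mathbf{y}))-f(\mathbf{x})\le\langle\mathcal{T}(\mathbf{y})-\mathbf{x},\,\mathbf{C}(\mathcal{T}(\mathbf{y})-\mathbf{y})\rangle-\tfrac12(\mathbf{x}-\mathcal{T}(\mathbf{y}))^T\mathbf{A}(\mathbf{x}-\mathcal{T}(\mathbf{y}))$.
   Context: $\partial h$ denotes the convex subdifferential. $\|\cdot\|$ is the Euclidean norm on vectors and the spectral norm (largest singular value) on matrices. Since $\mathbf{B}$ is lower triangular with positive diagonal and $h$ is separable, $\mathcal{T}(\mathbf{x})$ is well defined and can be computed by forward substitution: with $\mathbf{u}=\mathbf{b}+\mathbf{C}\mathbf{x}$, for $j=1,\dots,n$, $\mathbf{z}_j=\arg\min_t \tfrac12\mathbf{B}_{j,j}t^2+(\mathbf{u}_j+\sum_{i<j}\mathbf{B}_{j,i}\mathbf{z}_i)t+\varphi(t)$. *)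

theory Defs
  imports "HOL-Analysis.Analysis"
begin

definition proper_fun :: "(real \<Rightarrow> ereal) \<Rightarrow> bool" where
  "proper_fun \<phi> \<longleftrightarrow> (\<forall>t. \<phi> t \<noteq> -\<infinity>) \<and> (\<exists>t. \<phi> t \<noteq> \<infinity>)"

definition lsc_fun :: "(real \<Rightarrow> ereal) \<Rightarrow> bool" where
  "lsc_fun \<phi> \<longleftrightarrow> (\<forall>t. \<phi> t \<le> Liminf (at t) \<phi>)"

definition convex_ext :: "(real \<Rightarrow> ereal) \<Rightarrow> bool" where
  "convex_ext \<phi> \<longleftrightarrow> (\<forall>s t u. 0 < u \<and> u < 1 \<longrightarrow>
      \<phi> (u * s + (1 - u) * t) \<le> ereal u * \<phi> s + ereal (1 - u) * \<phi> t)"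

definition sep_fun :: "(real \<Rightarrow> ereal) \<Rightarrow> real^('n::{finite,linorder}) \<Rightarrow> ereal" where
  "sep_fun \<phi> x = (\<Sum>i\<in>UNIV. \<phi> (x $ i))"

definition subdiff :: "('a::real_inner \<Rightarrow> ereal) \<Rightarrow> 'a \<Rightarrow> 'a set" where
  "subdiff h z = {v. \<forall>w. h z + ereal (inner v (w - z)) \<le> h w}"

definition diag_part :: "real^('n::{finite,linorder})^('n::{finite,linorder}) \<Rightarrow> real^('n::{finite,linorder})^('n::{finite,linorder})" where
  "diag_part A = (\<chi> i j. if i = j then A $ i $ j else 0)"

definition strict_lower :: "real^('n::{finite,linorder})^('n::{finite,linorder}) \<Rightarrow> real^('n::{finite,linorder})^('n::{finite,linorder})" where
  "strict_lower A = (\<chi> i j. if j < i then A $ i $ j else 0)"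

definition sor_B :: "real^('n::{finite,linorder})^('n::{finite,linorder}) \<Rightarrow> real \<Rightarrow> real \<Rightarrow> real^('n::{finite,linorder})^('n::{finite,linorder})" where
  "sor_B A \<omega> \<theta> = strict_lower A + (1/\<omega>) *\<^sub>R (diag_part A + \<theta> *\<^sub>R mat 1)"

definition sor_C :: "real^('n::{finite,linorder})^('n::{finite,linorder}) \<Rightarrow> real \<Rightarrow> real \<Rightarrow> real^('n::{finite,linorder})^('n::{finite,linorder})" where
  "sor_C A \<omega> \<theta> = transpose (strict_lower A)
      + (1/\<omega>) *\<^sub>R ((\<omega> - 1) *\<^sub>R diag_part A - \<theta> *\<^sub>R mat 1)"

definition sor_T :: "real^('n::{finite,linorder})^('n::{finite,linorder}) \<Rightarrow> real^('n::{finite,linorder}) \<Rightarrow> (real \<Rightarrow> ereal) \<Rightarrow> real \<Rightarrow> real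
     \<Rightarrow> real^('n::{finite,linorder}) \<Rightarrow> real^('n::{finite,linorder})" where
  "sor_T A b \<phi> \<omega> \<theta> x = (THE z. - (sor_B A \<omega> \<theta> *v z + b + sor_C A \<omega> \<theta> *v x) \<in> subdiff (sep_fun \<phi>) z)"

definition obj_f :: "real^('n::{finite,linorder})^('n::{finite,linorder}) \<Rightarrow> real^('n::{finite,linorder}) \<Rightarrow> (real \<Rightarrow> ereal) \<Rightarrow> real^('n::{finite,linorder}) \<Rightarrow> ereal" where
  "obj_f A b \<phi> x = ereal (1/2 * inner x (A *v x) + inner x b) + sep_fun \<phi> x"

end

theory Submission
  imports Defs
begin

text \<open>Because \<open>B\<close> is lower triangular with positive diagonal and \<open>h\<close> is separable, the
inclusion \<open>0 \<in> B z + b + C x + \<partial>h(z)\<close> decouples, by forward substitution, into scalar problems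
\<open>0 \<in> \<beta> t + a + \<partial>\<phi>(t)\<close>; each is the optimality condition of minimising \<open>\<beta>/2 t\<^sup>2 + a t + \<phi>(t)\<close>,
which attains its minimum because a proper lsc convex \<open>\<phi>\<close> has a cone-shaped minorant
\<open>M - L\<bar>t - t\<^sub>0\<bar>\<close>. The solution is unique since \<open>B + B\<^sup>T = A + diag((2/\<omega>)(D + \<theta>) - D)\<close> is
positive definite and \<open>\<partial>h\<close> is monotone. For \<open>z = T(x)\<close> the subgradient
\<open>v = -(B z + b + C x)\<close> satisfies \<open>A z + b + v = C (z - x)\<close> by \<open>A = B + C\<close>: this gives (a) via the
operator norm, and (b) by combining \<open>h(x) \<ge> h(z) + \<langle>v, x - z\<rangle>\<close> with the exact expansion of
the quadratic part of \<open>f\<close> around \<open>z\<close>.\<close>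

lemma lsc_fun_less_ball:
  assumes "lsc_fun \<phi>" "ereal c < \<phi> t"
  shows "\<exists>e>0. \<forall>y. dist y t < e \<longrightarrow> ereal c < \<phi> y"
proof -
  have "\<phi> t = min (\<phi> t) (Liminf (at t) \<phi>)"
    using assms(1) unfolding lsc_fun_def by (simp add: min_absorb1)
  also have "\<dots> = (SUP e\<in>{0<..}. INF y\<in>ball t e. \<phi> y)" by (rule min_Liminf_at)
  finally obtain e where "e > 0" "ereal c < (INF y\<in>ball t e. \<phi> y)"
    using assms(2) by (auto simp: less_SUP_iff)
  then show ?thesis by (auto simp: less_INF_D dist_commute)
qed

lemma lsc_fun_add_continuous_less_ball:
  fixes q :: "real \<Rightarrow> real"
  assumes lsc: "lsc_fun \<phi>" and ninf: "\<And>t. \<phi> t \<noteq> -\<infinity>" and q: "isCont q t"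
    and c: "ereal c < ereal (q t) + \<phi> t"
  shows "\<exists>e>0. \<forall>y. dist y t < e \<longrightarrow> ereal c < ereal (q y) + \<phi> y"
proof -
  have "ereal (c - q t) < \<phi> t" using c ninf[of t] by (cases "\<phi> t") auto
  then obtain z where z: "c - q t < z" "ereal z < \<phi> t" using ereal_dense2 by force
  obtain e1 where e1: "e1 > 0" "\<forall>y. dist y t < e1 \<longrightarrow> ereal z < \<phi> y"
    using lsc_fun_less_ball[OF lsc z(2)] by blast
  obtain e2 where e2: "e2 > 0" "\<forall>y. dist y t < e2 \<longrightarrow> dist (q y) (q t) < z - (c - q t)"
    using q z(1) unfolding continuous_at_eps_delta by (meson diff_gt_0_iff_gt)
  have "ereal c < ereal (q y) + \<phi> y" if "dist y t < min e1 e2" for y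
  proof -
    have "ereal z < \<phi> y" "c - z < q y"
      using e1 e2 that by (auto simp: dist_real_def abs_less_iff)
    then show ?thesis using ninf[of y] by (cases "\<phi> y") auto
  qed
  then show ?thesis using e1(1) e2(1) by (intro exI[of _ "min e1 e2"]) auto
qed

lemma ereal_lsc_attains_min_on_compact:
  fixes g :: "'a::metric_space \<Rightarrow> ereal"
  assumes K: "compact K" "K \<noteq> {}"
    and lsc: "\<forall>t\<in>K. \<forall>c. ereal c < g t \<longrightarrow> (\<exists>e>0. \<forall>y. dist y t < e \<longrightarrow> ereal c < g y)"
  shows "\<exists>t\<in>K. \<forall>y\<in>K. g t \<le> g y"
proof (rule ccontr)
  assume no_min: "\<not> ?thesis"
  define m where "m = (INF y\<in>K. g y)"
  have "\<exists>c. m < ereal c \<and> ereal c < g t" if t: "t \<in> K" for t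
  proof -
    obtain y where "y \<in> K" "g y < g t" using no_min t by (force simp: not_le)
    then have "m < g t" unfolding m_def by (meson INF_lower order.strict_trans1)
    then show ?thesis by (rule ereal_dense2)
  qed
  then obtain c where c: "\<forall>t\<in>K. m < ereal (c t) \<and> ereal (c t) < g t" by metis
  then have "\<forall>t\<in>K. \<exists>e>0. \<forall>y. dist y t < e \<longrightarrow> ereal (c t) < g y" using lsc by blast
  then obtain e where e: "\<forall>t\<in>K. e t > 0 \<and> (\<forall>y. dist y t < e t \<longrightarrow> ereal (c t) < g y)"
    by metis
  have "K \<subseteq> (\<Union>t\<in>K. ball t (e t))" using e by force
  then obtain F where F: "F \<subseteq> K" "finite F" "K \<subseteq> (\<Union>t\<in>F. ball t (e t))"
    using compactE_image[OF K(1), of K "\<lambda>t. ball t (e t)"] by blast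
  have "F \<noteq> {}" using F(3) K(2) by auto
  have "ereal (Min (c ` F)) \<le> m" unfolding m_def
  proof (rule INF_greatest)
    fix y assume "y \<in> K"
    then obtain t where t: "t \<in> F" "y \<in> ball t (e t)" using F(3) by blast
    then have "ereal (c t) < g y" using e F(1) by (auto simp: dist_commute)
    moreover have "Min (c ` F) \<le> c t" using t(1) F(2) by simp
    ultimately show "ereal (Min (c ` F)) \<le> g y" by (meson ereal_less_eq(3) less_imp_le order_trans)
  qed
  moreover have "Min (c ` F) \<in> c ` F" using F(2) \<open>F \<noteq> {}\<close> by (intro Min_in) auto
  then have "m < ereal (Min (c ` F))" using c F(1) by auto
  ultimately show False by simp
qed

lemma convex_lsc_cone_minorant:
  assumes proper: "proper_fun \<phi>" and lsc: "lsc_fun \<phi>" and cvx: "convex_ext \<phi>"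
    and t0: "\<phi> t0 = ereal p0"
  shows "\<exists>M L. L \<ge> 0 \<and> M \<le> p0 \<and> (\<forall>y. ereal (M - L * \<bar>y - t0\<bar>) \<le> \<phi> y)"
proof -
  have ninf: "\<And>t. \<phi> t \<noteq> -\<infinity>" using proper unfolding proper_fun_def by blast
  have "\<exists>t\<in>cball t0 1. \<forall>y\<in>cball t0 1. \<phi> t \<le> \<phi> y"
    by (rule ereal_lsc_attains_min_on_compact) (auto intro: lsc_fun_less_ball[OF lsc])
  then obtain tm where tm: "tm \<in> cball t0 1" "\<forall>y\<in>cball t0 1. \<phi> tm \<le> \<phi> y" by blast
  then have "\<phi> tm \<le> \<phi> t0" by simp
  then obtain M where M: "\<phi> tm = ereal M" and "M \<le> p0"
    using t0 ninf[of tm] by (cases "\<phi> tm") auto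
  define L where "L = p0 - M"
  have near: "ereal M \<le> \<phi> y" if "\<bar>y - t0\<bar> \<le> 1" for y
    using tm(2) M that by (auto simp: dist_real_def abs_minus_commute)
  \<comment> \<open>far from t0, convexity along the segment to the unit sphere around t0 gives the slope L\<close>
  have "ereal (M - L * \<bar>y - t0\<bar>) \<le> \<phi> y" for y
  proof (cases "\<phi> y")
    case (real r)
    show ?thesis
    proof (cases "\<bar>y - t0\<bar> \<le> 1")
      case True
      have "0 \<le> L * \<bar>y - t0\<bar>" using \<open>M \<le> p0\<close> unfolding L_def by simp
      then show ?thesis using near[of y] True real by simp
    next
      case False
      define d where "d = \<bar>y - t0\<bar>"
      have d1: "d > 1" using False d_def by simp
      define u where "u = 1 / d"
      have u: "0 < u" "u < 1" using d1 u_def by auto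
      have "(u * y + (1 - u) * t0) - t0 = u * (y - t0)" by (simp add: algebra_simps)
      then have "\<bar>(u * y + (1 - u) * t0) - t0\<bar> = 1"
        using d1 unfolding u_def d_def by (simp add: abs_mult)
      then have "ereal M \<le> \<phi> (u * y + (1 - u) * t0)" by (intro near) simp
      also have "\<dots> \<le> ereal u * \<phi> y + ereal (1 - u) * \<phi> t0"
        using cvx u unfolding convex_ext_def by blast
      also have "\<dots> = ereal (u * r + (1 - u) * p0)" using real t0 by simp
      finally have "d * M \<le> d * (u * r + (1 - u) * p0)" using d1 by simp
      also have "\<dots> = r + (d - 1) * p0" using d1 unfolding u_def by (simp add: algebra_simps)
      finally show ?thesis using real \<open>M \<le> p0\<close> unfolding L_def d_def by (simp add: algebra_simps)
    qed
  qed (use ninf in auto)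
  then show ?thesis using \<open>M \<le> p0\<close> unfolding L_def by (intro exI[of _ M] exI[of _ "p0 - M"]) auto
qed

lemma quadratic_gt_linear_far:
  fixes \<beta> P Q x :: real
  assumes "\<beta> > 0" "P \<ge> 0" "Q \<ge> 0" "\<bar>x\<bar> \<ge> 2 * (P + 1) / \<beta> + Q + 1"
  shows "\<beta> / 2 * x\<^sup>2 - P * \<bar>x\<bar> - Q > 0"
proof -
  have "2 * (P + 1) / \<beta> \<ge> 0" using assms(1,2) by simp
  then have big: "\<bar>x\<bar> \<ge> 2 * (P + 1) / \<beta>" "\<bar>x\<bar> > Q" using assms(3,4) by linarith+
  then have "\<beta> / 2 * \<bar>x\<bar> \<ge> P + 1" using assms(1) by (simp add: field_simps)
  then have "(\<beta> / 2 * \<bar>x\<bar>) * \<bar>x\<bar> \<ge> (P + 1) * \<bar>x\<bar>" by (rule mult_right_mono) simp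
  moreover have "x\<^sup>2 = \<bar>x\<bar> * \<bar>x\<bar>" by (simp add: power2_eq_square)
  ultimately show ?thesis using big(2) by (simp add: algebra_simps)
qed

lemma quadratic_plus_lsc_attains_min:
  fixes \<beta> a :: real
  assumes \<beta>: "\<beta> > 0" and proper: "proper_fun \<phi>" and lsc: "lsc_fun \<phi>" and cvx: "convex_ext \<phi>"
  shows "\<exists>t. \<forall>y. ereal (\<beta>/2 * t\<^sup>2 + a * t) + \<phi> t \<le> ereal (\<beta>/2 * y\<^sup>2 + a * y) + \<phi> y"
proof -
  have ninf: "\<And>t. \<phi> t \<noteq> -\<infinity>" using proper unfolding proper_fun_def by blast
  obtain t0 where "\<phi> t0 \<noteq> \<infinity>" using proper unfolding proper_fun_def by blast
  then obtain p0 where t0: "\<phi> t0 = ereal p0" using ninf[of t0] by (cases "\<phi> t0") auto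
  obtain M L where minorant: "L \<ge> 0" "M \<le> p0" "\<forall>y. ereal (M - L * \<bar>y - t0\<bar>) \<le> \<phi> y"
    using convex_lsc_cone_minorant[OF proper lsc cvx t0] by blast
  define q where "q y = \<beta>/2 * y\<^sup>2 + a * y" for y
  define g where "g y = ereal (q y) + \<phi> y" for y
  define P where "P = \<bar>\<beta> * t0 + a\<bar> + L"
  define R where "R = 2 * (P + 1) / \<beta> + (p0 - M) + 1"
  have far: "g t0 < g y" if y: "\<bar>y - t0\<bar> \<ge> R" for y
  proof -
    define s where "s = y - t0"
    have "\<beta>/2 * s\<^sup>2 - P * \<bar>s\<bar> - (p0 - M) > 0"
      using quadratic_gt_linear_far[OF \<beta> _ _ y[unfolded R_def]] minorant unfolding P_def s_def by simp
    moreover have "q y - q t0 = \<beta>/2 * s\<^sup>2 + (\<beta> * t0 + a) * s"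
      unfolding q_def s_def by (simp add: algebra_simps power2_eq_square)
    moreover have "(\<beta> * t0 + a) * s \<ge> - \<bar>\<beta> * t0 + a\<bar> * \<bar>s\<bar>"
      by (metis abs_ge_minus_self abs_mult minus_le_iff mult_minus_left)
    ultimately have "ereal (q t0 + p0) < ereal (q y) + ereal (M - L * \<bar>s\<bar>)"
      unfolding P_def by (simp add: algebra_simps)
    also have "\<dots> \<le> g y" unfolding g_def using minorant(3) s_def by (intro add_left_mono) auto
    finally show ?thesis unfolding g_def using t0 by simp
  qed
  have R0: "R \<ge> 0" unfolding R_def P_def using \<beta> minorant by (smt (verit) divide_nonneg_pos)
  have "\<exists>t\<in>cball t0 R. \<forall>y\<in>cball t0 R. g t \<le> g y"
    using R0 lsc_fun_add_continuous_less_ball[OF lsc ninf]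
    by (intro ereal_lsc_attains_min_on_compact) (auto simp: g_def q_def)
  then obtain t where t: "t \<in> cball t0 R" "\<forall>y\<in>cball t0 R. g t \<le> g y" by blast
  have "g t \<le> g y" for y
  proof (cases "y \<in> cball t0 R")
    case False
    then have "g t0 < g y" by (intro far) (simp add: dist_real_def)
    moreover have "g t \<le> g t0" using t R0 by simp
    ultimately show ?thesis by simp
  qed (use t in simp)
  then show ?thesis unfolding g_def q_def by blast
qed

lemma quadratic_plus_convex_minimizer_subgradient:
  fixes \<beta> a t r :: real
  assumes \<beta>: "\<beta> > 0" and cvx: "convex_ext \<phi>" and ninf: "\<And>t. \<phi> t \<noteq> -\<infinity>"
    and fin: "\<phi> t = ereal r"
    and min: "\<And>y. ereal (\<beta>/2 * t\<^sup>2 + a * t) + \<phi> t \<le> ereal (\<beta>/2 * y\<^sup>2 + a * y) + \<phi> y"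
  shows "\<phi> t + ereal (- (\<beta> * t + a) * (w - t)) \<le> \<phi> w"
proof (cases "\<phi> w")
  case (real rw)
  define d where "d = w - t"
  define q where "q y = \<beta>/2 * y\<^sup>2 + a * y" for y
  \<comment> \<open>test minimality against \<open>u w + (1 - u) t\<close>, divide by \<open>u\<close>, and let \<open>u \<rightarrow> 0\<close>\<close>
  have slope: "r - rw - (\<beta> * t + a) * d \<le> \<beta>/2 * u * d\<^sup>2" if u: "0 < u" "u < 1" for u
  proof -
    have "ereal (q t + r) \<le> ereal (q (u * w + (1 - u) * t)) + \<phi> (u * w + (1 - u) * t)"
      using min fin unfolding q_def by simp
    also have "\<dots> \<le> ereal (q (u * w + (1 - u) * t)) + (ereal u * \<phi> w + ereal (1 - u) * \<phi> t)"
      using cvx u unfolding convex_ext_def by (intro add_left_mono) blast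
    finally have "q t + r \<le> q (u * w + (1 - u) * t) + u * rw + (1 - u) * r"
      using real fin by simp
    moreover have "q (u * w + (1 - u) * t) - q t = (\<beta> * t + a) * u * d + \<beta>/2 * u\<^sup>2 * d\<^sup>2"
      unfolding q_def d_def by (simp add: algebra_simps power2_eq_square)
    ultimately have "u * (r - rw - (\<beta> * t + a) * d) \<le> u * (\<beta>/2 * u * d\<^sup>2)"
      by (simp add: algebra_simps power2_eq_square)
    then show ?thesis using u by simp
  qed
  have "r - rw - (\<beta> * t + a) * d \<le> 0"
  proof (rule field_le_epsilon)
    fix e :: real assume e: "0 < e"
    define u where "u = min (1/2) (e / (\<beta> * d\<^sup>2 + 1))"
    have "0 < \<beta> * d\<^sup>2 + 1" using \<beta> by (simp add: add_nonneg_pos)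
    then have u: "0 < u" "u < 1" using e unfolding u_def by auto
    have "u * (\<beta> * d\<^sup>2 + 1) \<le> e"
      using e \<beta> unfolding u_def by (simp add: min_def field_simps add_pos_nonneg)
    then have "\<beta>/2 * u * d\<^sup>2 \<le> e" using u e by (simp add: algebra_simps)
    then show "r - rw - (\<beta> * t + a) * d \<le> 0 + e" using slope[OF u] by simp
  qed
  then show ?thesis using real fin unfolding d_def by (simp add: algebra_simps)
qed (use ninf in auto)

lemma prox_quadratic_plus_convex_exists:
  fixes \<beta> a :: real
  assumes \<beta>: "\<beta> > 0" and proper: "proper_fun \<phi>" and lsc: "lsc_fun \<phi>" and cvx: "convex_ext \<phi>"
  shows "\<exists>t. \<phi> t \<noteq> \<infinity> \<and> (\<forall>w. \<phi> t + ereal (- (\<beta> * t + a) * (w - t)) \<le> \<phi> w)"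
proof -
  have ninf: "\<And>t. \<phi> t \<noteq> -\<infinity>" using proper unfolding proper_fun_def by blast
  obtain t where min: "\<And>y. ereal (\<beta>/2 * t\<^sup>2 + a * t) + \<phi> t \<le> ereal (\<beta>/2 * y\<^sup>2 + a * y) + \<phi> y"
    using quadratic_plus_lsc_attains_min[OF \<beta> proper lsc cvx] by blast
  obtain t0 where "\<phi> t0 \<noteq> \<infinity>" using proper unfolding proper_fun_def by blast
  then have "\<phi> t \<noteq> \<infinity>" using min[of t0] ninf[of t0] by auto
  moreover obtain r where "\<phi> t = ereal r" using \<open>\<phi> t \<noteq> \<infinity>\<close> ninf[of t] by (cases "\<phi> t") auto
  ultimately show ?thesis
    using quadratic_plus_convex_minimizer_subgradient[OF \<beta> cvx ninf _ min] by blast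
qed

lemma subdiff_imp_finite:
  assumes ninf: "\<And>x. h x \<noteq> -\<infinity>" and w: "h w \<noteq> \<infinity>" and v: "v \<in> subdiff h z"
  shows "\<exists>r. h z = ereal r"
proof -
  have "h z + ereal (inner v (w - z)) \<le> h w" using v unfolding subdiff_def by blast
  then have "h z \<noteq> \<infinity>" using w by auto
  then show ?thesis using ninf[of z] by (cases "h z") auto
qed

lemma subdiff_monotone:
  assumes "v1 \<in> subdiff h z1" "v2 \<in> subdiff h z2" "h z1 = ereal r1" "h z2 = ereal r2"
  shows "0 \<le> inner (v1 - v2) (z1 - z2)"
proof -
  have "h z1 + ereal (inner v1 (z2 - z1)) \<le> h z2" "h z2 + ereal (inner v2 (z1 - z2)) \<le> h z1"
    using assms(1,2) unfolding subdiff_def by blast+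
  then have "r1 + inner v1 (z2 - z1) \<le> r2" "r2 + inner v2 (z1 - z2) \<le> r1"
    using assms(3,4) by simp_all
  then show ?thesis by (simp add: inner_diff_left inner_diff_right)
qed

lemma subdiff_inclusion_unique:
  fixes B :: "real^'n^'n" and h :: "real^'n \<Rightarrow> ereal"
  assumes posdef: "\<And>d. d \<noteq> 0 \<Longrightarrow> 0 < inner d (B *v d)"
    and ninf: "\<And>x. h x \<noteq> -\<infinity>" and w: "h w \<noteq> \<infinity>"
    and z1: "- (B *v z1 + c) \<in> subdiff h z1" and z2: "- (B *v z2 + c) \<in> subdiff h z2"
  shows "z1 = z2"
proof -
  obtain r1 r2 where "h z1 = ereal r1" "h z2 = ereal r2"
    using subdiff_imp_finite[of h, OF ninf w] z1 z2 by metis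
  then have "0 \<le> inner (- (B *v z1 + c) - - (B *v z2 + c)) (z1 - z2)"
    using subdiff_monotone[OF z1 z2] by blast
  then have "inner (z1 - z2) (B *v (z1 - z2)) \<le> 0"
    by (simp add: matrix_vector_mult_diff_distrib inner_diff_left inner_diff_right inner_commute)
  then show ?thesis using posdef[of "z1 - z2"] by force
qed

lemma sep_fun_neq_MInf:
  assumes "\<And>t. \<phi> t \<noteq> -\<infinity>"
  shows "sep_fun \<phi> z \<noteq> -\<infinity>"
  unfolding sep_fun_def using assms by (induct rule: infinite_finite_induct) auto

lemma sep_fun_const_neq_PInf:
  assumes "\<phi> t \<noteq> \<infinity>"
  shows "sep_fun \<phi> (\<chi> i. t) \<noteq> \<infinity>"
  unfolding sep_fun_def using assms by (simp add: sum_Pinfty)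

lemma sep_fun_subdiffI:
  fixes z s :: "real^'n::{finite,linorder}"
  assumes ninf: "\<And>t. \<phi> t \<noteq> -\<infinity>"
    and fin: "\<And>j. \<phi> (z$j) \<noteq> \<infinity>"
    and sub: "\<And>j w. \<phi> (z$j) + ereal (s$j * (w - z$j)) \<le> \<phi> w"
  shows "s \<in> subdiff (sep_fun \<phi>) z"
  unfolding subdiff_def
proof (safe)
  fix w
  have "\<exists>r. \<phi> (z$j) = ereal r" for j using fin[of j] ninf[of "z$j"] by (cases "\<phi> (z$j)") auto
  then obtain r where r: "\<And>j. \<phi> (z$j) = ereal (r j)" by metis
  have "sep_fun \<phi> z + ereal (inner s (w - z)) = (\<Sum>j\<in>UNIV. ereal (r j + s$j * (w$j - z$j)))"
    unfolding sep_fun_def by (simp add: r inner_vec_def sum.distrib)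
  also have "\<dots> \<le> (\<Sum>j\<in>UNIV. \<phi> (w$j))"
    using sub r by (intro sum_mono) (metis plus_ereal.simps(1))
  finally show "sep_fun \<phi> z + ereal (inner s (w - z)) \<le> sep_fun \<phi> w"
    unfolding sep_fun_def .
qed

lemma lower_triangular_subdiff_inclusion_exists:
  fixes B :: "real^('n::{finite,linorder})^('n::{finite,linorder})" and c :: "real^('n::{finite,linorder})"
  assumes proper: "proper_fun \<phi>" and lsc: "lsc_fun \<phi>" and cvx: "convex_ext \<phi>"
    and lower: "\<And>i j. i < j \<Longrightarrow> B$i$j = 0" and diag: "\<And>i. 0 < B$i$i"
  shows "\<exists>z. - (B *v z + c) \<in> subdiff (sep_fun \<phi>) z"
proof -
  have ninf: "\<And>t. \<phi> t \<noteq> -\<infinity>" using proper unfolding proper_fun_def by blast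
  define solves where "solves z j \<longleftrightarrow> \<phi> (z$j) \<noteq> \<infinity> \<and>
      (\<forall>w. \<phi> (z$j) + ereal ((- (B *v z + c))$j * (w - z$j)) \<le> \<phi> w)" for z :: "real^('n::{finite,linorder})" and j
  \<comment> \<open>forward substitution: row k of B only involves the coordinates up to k\<close>
  have "\<exists>z. \<forall>j\<in>S. solves z j" if "finite S" for S
    using that
  proof (induct S rule: finite_linorder_max_induct)
    case (insert k S)
    then obtain z where z: "\<forall>j\<in>S. solves z j" by blast
    define a where "a = c$k + (\<Sum>i\<in>UNIV-{k}. B$k$i * z$i)"
    obtain t where t: "\<phi> t \<noteq> \<infinity>" "\<forall>w. \<phi> t + ereal (- (B$k$k * t + a) * (w - t)) \<le> \<phi> w"
      using prox_quadratic_plus_convex_exists[OF diag proper lsc cvx] by blast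
    define z' where "z' = (\<chi> i. if i = k then t else z$i)"
    have "(B *v z')$k = B$k$k * t + (\<Sum>i\<in>UNIV-{k}. B$k$i * z$i)"
      unfolding matrix_vector_mult_def z'_def by (simp add: sum.remove[of UNIV k])
    then have "(- (B *v z' + c))$k = - (B$k$k * t + a)" unfolding a_def by simp
    then have "solves z' k" using t unfolding solves_def by (simp add: z'_def)
    moreover have "solves z' j" if j: "j \<in> S" for j
    proof -
      have "j < k" using insert(2) j by blast
      then have "(B *v z')$j = (B *v z)$j"
        unfolding matrix_vector_mult_def z'_def using lower by (auto intro: sum.cong)
      moreover have "z'$j = z$j" using \<open>j < k\<close> unfolding z'_def by auto
      ultimately show ?thesis using z j unfolding solves_def by simp
    qed
    ultimately show ?case by blast
  qed simp
  then obtain z where "\<forall>j. solves z j" by (metis finite UNIV_I)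
  then show ?thesis by (intro exI sep_fun_subdiffI[OF ninf]) (auto simp: solves_def)
qed

lemma sor_B_entry:
  "sor_B A \<omega> \<theta> $ i $ j = (if j < i then A$i$j else 0) + (if i = j then (A$i$j + \<theta>) / \<omega> else 0)"
  by (simp add: sor_B_def strict_lower_def diag_part_def mat_def add_divide_distrib)

lemma sor_B_plus_sor_C:
  assumes sym: "transpose A = A" and "\<omega> \<noteq> 0"
  shows "sor_B A \<omega> \<theta> + sor_C A \<omega> \<theta> = A"
proof -
  have "A$j$i = A$i$j" for i j using sym by (metis transpose_def vec_lambda_beta)
  then show ?thesis using assms(2) unfolding vec_eq_iff
    by (auto simp: sor_B_def sor_C_def strict_lower_def diag_part_def mat_def transpose_def
        field_simps not_less_iff_gr_or_eq)
qed

lemma sor_B_plus_transpose: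
  assumes sym: "transpose A = A"
  shows "sor_B A \<omega> \<theta> + transpose (sor_B A \<omega> \<theta>)
    = A + (\<chi> i j. if i = j then 2 / \<omega> * (A$i$i + \<theta>) - A$i$i else 0)"
proof -
  have "A$j$i = A$i$j" for i j using sym by (metis transpose_def vec_lambda_beta)
  then show ?thesis unfolding vec_eq_iff
    by (auto simp: sor_B_entry transpose_def add_divide_distrib not_less_iff_gr_or_eq)
qed

lemma inner_transpose_mult:
  fixes M :: "real^'n^'n"
  shows "inner d (transpose M *v d) = inner d (M *v d)"
  by (metis dot_lmul_matrix inner_commute transpose_matrix_vector)

lemma inner_diagonal_mult:
  "inner d ((\<chi> i j. if i = j then e i else 0) *v d) = (\<Sum>i\<in>UNIV. e i * (d$i)\<^sup>2)"
  by (simp add: inner_vec_def matrix_vector_mult_def power2_eq_square mult_ac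
      if_distrib[of "\<lambda>x. _ * x"] cong: if_cong)

lemma sor_B_posdef:
  assumes sym: "transpose A = A" and psd: "\<forall>x. 0 \<le> inner x (A *v x)"
    and omega: "0 < \<omega>" "\<omega> < 2" and theta: "0 \<le> \<theta>"
    and diagpos: "\<forall>i. A $ i $ i + \<theta> > 0" and "d \<noteq> 0"
  shows "0 < inner d (sor_B A \<omega> \<theta> *v d)"
proof -
  define e where "e i = 2 / \<omega> * (A$i$i + \<theta>) - A$i$i" for i
  have e: "e i > 0" for i
  proof -
    have "2 / \<omega> - 1 > 0" using omega by (simp add: field_simps)
    then have "(2 / \<omega> - 1) * (A$i$i + \<theta>) > 0" using diagpos by simp
    then show ?thesis unfolding e_def using theta by (simp add: algebra_simps)
  qed
  obtain k where "d$k \<noteq> 0" using \<open>d \<noteq> 0\<close> by (metis vec_eq_iff zero_index)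
  then have "0 < (\<Sum>i\<in>UNIV. e i * (d$i)\<^sup>2)"
    using e by (intro sum_pos2[of UNIV k]) (auto simp: less_imp_le)
  moreover have "2 * inner d (sor_B A \<omega> \<theta> *v d) = inner d (A *v d) + (\<Sum>i\<in>UNIV. e i * (d$i)\<^sup>2)"
    using arg_cong[OF sor_B_plus_transpose[OF sym], of "\<lambda>M. inner d (M *v d)"]
    by (simp add: matrix_vector_mult_add_rdistrib inner_add_right inner_transpose_mult
        inner_diagonal_mult e_def del: transpose_matrix_vector)
  ultimately show ?thesis using psd by (smt (verit))
qed

lemma inner_symmetric_mult:
  fixes A :: "real^'n^'n"
  assumes "transpose A = A"
  shows "inner x (A *v y) = inner y (A *v x)"
  by (metis assms dot_lmul_matrix inner_commute transpose_matrix_vector)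

lemma sor_T_spec:
  fixes A :: "real^('n::{finite,linorder})^('n::{finite,linorder})" and b x :: "real^('n::{finite,linorder})"
  assumes sym: "transpose A = A" and psd: "\<forall>x. 0 \<le> inner x (A *v x)"
    and proper: "proper_fun \<phi>" and lsc: "lsc_fun \<phi>" and cvx: "convex_ext \<phi>"
    and omega: "0 < \<omega>" "\<omega> < 2" and theta: "0 \<le> \<theta>"
    and diagpos: "\<forall>i. A $ i $ i + \<theta> > 0"
  shows "- (sor_B A \<omega> \<theta> *v sor_T A b \<phi> \<omega> \<theta> x + b + sor_C A \<omega> \<theta> *v x)
    \<in> subdiff (sep_fun \<phi>) (sor_T A b \<phi> \<omega> \<theta> x)"
proof -
  define c where "c = b + sor_C A \<omega> \<theta> *v x"
  have ninf: "\<And>z. sep_fun \<phi> z \<noteq> -\<infinity>"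
    using proper sep_fun_neq_MInf unfolding proper_fun_def by blast
  obtain t0 where "\<phi> t0 \<noteq> \<infinity>" using proper unfolding proper_fun_def by blast
  then have fin: "sep_fun \<phi> (\<chi> i. t0) \<noteq> \<infinity>" by (rule sep_fun_const_neq_PInf)
  have "\<exists>!z. - (sor_B A \<omega> \<theta> *v z + c) \<in> subdiff (sep_fun \<phi>) z"
  proof (rule ex_ex1I)
    show "\<exists>z. - (sor_B A \<omega> \<theta> *v z + c) \<in> subdiff (sep_fun \<phi>) z"
      using omega diagpos
      by (intro lower_triangular_subdiff_inclusion_exists[OF proper lsc cvx]) (auto simp: sor_B_entry)
  next
    fix z1 z2
    assume "- (sor_B A \<omega> \<theta> *v z1 + c) \<in> subdiff (sep_fun \<phi>) z1"
      and "- (sor_B A \<omega> \<theta> *v z2 + c) \<in> subdiff (sep_fun \<phi>) z2"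
    then show "z1 = z2"
      using subdiff_inclusion_unique[of "sor_B A \<omega> \<theta>" "sep_fun \<phi>", OF _ ninf fin]
        sor_B_posdef[OF sym psd omega theta diagpos] by blast
  qed
  then show ?thesis unfolding sor_T_def add.assoc c_def by (rule theI')
qed

lemma sor_T_residual:
  fixes A :: "real^('n::{finite,linorder})^('n::{finite,linorder})" and b x :: "real^('n::{finite,linorder})"
  assumes sym: "transpose A = A" and psd: "\<forall>x. 0 \<le> inner x (A *v x)"
    and proper: "proper_fun \<phi>" and lsc: "lsc_fun \<phi>" and cvx: "convex_ext \<phi>"
    and omega: "0 < \<omega>" "\<omega> < 2" and theta: "0 \<le> \<theta>"
    and diagpos: "\<forall>i. A $ i $ i + \<theta> > 0"
  shows "\<exists>v\<in>subdiff (sep_fun \<phi>) (sor_T A b \<phi> \<omega> \<theta> x).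
    A *v sor_T A b \<phi> \<omega> \<theta> x + b + v = sor_C A \<omega> \<theta> *v (sor_T A b \<phi> \<omega> \<theta> x - x)"
proof -
  define z where "z = sor_T A b \<phi> \<omega> \<theta> x"
  define v where "v = - (sor_B A \<omega> \<theta> *v z + b + sor_C A \<omega> \<theta> *v x)"
  have "v \<in> subdiff (sep_fun \<phi>) z"
    using sor_T_spec[OF sym psd proper lsc cvx omega theta diagpos] unfolding v_def z_def .
  moreover have "A *v z = sor_B A \<omega> \<theta> *v z + sor_C A \<omega> \<theta> *v z"
    using sor_B_plus_sor_C[OF sym] omega(1) by (metis less_irrefl matrix_vector_mult_add_rdistrib)
  then have "A *v z + b + v = sor_C A \<omega> \<theta> *v (z - x)"
    unfolding v_def by (simp add: matrix_vector_mult_diff_distrib algebra_simps)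
  ultimately show ?thesis unfolding z_def by blast
qed

lemma obj_f_subgradient_bound:
  fixes A :: "real^('n::{finite,linorder})^('n::{finite,linorder})" and b x z :: "real^('n::{finite,linorder})"
  assumes sym: "transpose A = A" and proper: "proper_fun \<phi>" and v: "v \<in> subdiff (sep_fun \<phi>) z"
  shows "obj_f A b \<phi> z - obj_f A b \<phi> x
    \<le> ereal (inner (z - x) (A *v z + b + v) - 1/2 * inner (x - z) (A *v (x - z)))"
proof -
  have ninf: "\<And>z. sep_fun \<phi> z \<noteq> -\<infinity>"
    using proper sep_fun_neq_MInf unfolding proper_fun_def by blast
  obtain t0 where "\<phi> t0 \<noteq> \<infinity>" using proper unfolding proper_fun_def by blast
  then obtain r where r: "sep_fun \<phi> z = ereal r"
    using subdiff_imp_finite[of "sep_fun \<phi>", OF ninf sep_fun_const_neq_PInf v] by blast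
  define q where "q w = 1/2 * inner w (A *v w) + inner w b" for w
  have q: "q z - q x = inner (z - x) (A *v z + b) - 1/2 * inner (x - z) (A *v (x - z))"
    using inner_symmetric_mult[OF sym, of z x] unfolding q_def
    by (simp add: inner_diff_left inner_diff_right inner_add_right matrix_vector_mult_diff_distrib
        algebra_simps)
  show ?thesis
  proof (cases "sep_fun \<phi> x")
    case (real s)
    have "sep_fun \<phi> z + ereal (inner v (x - z)) \<le> sep_fun \<phi> x"
      using v unfolding subdiff_def by blast
    then have "r + inner v (x - z) \<le> s" using r real by simp
    then have "q z + r - (q x + s) \<le> inner (z - x) (A *v z + b + v) - 1/2 * inner (x - z) (A *v (x - z))"
      using q by (simp add: inner_add_right inner_diff_left inner_diff_right inner_commute)
    then show ?thesis unfolding obj_f_def q_def[symmetric] using r real by simp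
  qed (use r ninf in \<open>auto simp: obj_f_def\<close>)
qed

theorem lemma1:
  fixes A :: "real^('n::{finite,linorder})^('n::{finite,linorder})" and b :: "real^('n::{finite,linorder})"
    and \<phi> :: "real \<Rightarrow> ereal" and \<omega> \<theta> :: real
  assumes sym: "transpose A = A"
    and psd: "\<forall>x. 0 \<le> inner x (A *v x)"
    and proper: "proper_fun \<phi>" and lsc: "lsc_fun \<phi>" and cvx: "convex_ext \<phi>"
    and omega: "0 < \<omega>" "\<omega> < 2"
    and theta: "0 \<le> \<theta>"
    and diagpos: "\<forall>i. A $ i $ i + \<theta> > 0"
  shows "\<forall>x y :: real^('n::{finite,linorder}).
    (\<exists>v \<in> subdiff (sep_fun \<phi>) (sor_T A b \<phi> \<omega> \<theta> x).
       norm (A *v sor_T A b \<phi> \<omega> \<theta> x + b + v)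
         \<le> onorm (\<lambda>u. sor_C A \<omega> \<theta> *v u) * norm (x - sor_T A b \<phi> \<omega> \<theta> x))
    \<and> obj_f A b \<phi> (sor_T A b \<phi> \<omega> \<theta> y) - obj_f A b \<phi> x
        \<le> ereal (inner (sor_T A b \<phi> \<omega> \<theta> y - x) (sor_C A \<omega> \<theta> *v (sor_T A b \<phi> \<omega> \<theta> y - y))
           - 1/2 * inner (x - sor_T A b \<phi> \<omega> \<theta> y) (A *v (x - sor_T A b \<phi> \<omega> \<theta> y)))"
proof (intro allI conjI)
  note residual = sor_T_residual[OF sym psd proper lsc cvx omega theta diagpos]
  fix x y :: "real^('n::{finite,linorder})"
  obtain v where "v \<in> subdiff (sep_fun \<phi>) (sor_T A b \<phi> \<omega> \<theta> x)"
    and v: "A *v sor_T A b \<phi> \<omega> \<theta> x + b + v = sor_C A \<omega> \<theta> *v (sor_T A b \<phi> \<omega> \<theta> x - x)"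
    using residual by blast
  moreover have "norm (sor_C A \<omega> \<theta> *v (sor_T A b \<phi> \<omega> \<theta> x - x))
      \<le> onorm (\<lambda>u. sor_C A \<omega> \<theta> *v u) * norm (x - sor_T A b \<phi> \<omega> \<theta> x)"
    using onorm[of "\<lambda>u. sor_C A \<omega> \<theta> *v u"] by (simp add: norm_minus_commute[of x])
  ultimately show "\<exists>v \<in> subdiff (sep_fun \<phi>) (sor_T A b \<phi> \<omega> \<theta> x).
      norm (A *v sor_T A b \<phi> \<omega> \<theta> x + b + v)
        \<le> onorm (\<lambda>u. sor_C A \<omega> \<theta> *v u) * norm (x - sor_T A b \<phi> \<omega> \<theta> x)"
    by metis
  obtain w where w: "w \<in> subdiff (sep_fun \<phi>) (sor_T A b \<phi> \<omega> \<theta> y)"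
    and "A *v sor_T A b \<phi> \<omega> \<theta> y + b + w = sor_C A \<omega> \<theta> *v (sor_T A b \<phi> \<omega> \<theta> y - y)"
    using residual by blast
  then show "obj_f A b \<phi> (sor_T A b \<phi> \<omega> \<theta> y) - obj_f A b \<phi> x
      \<le> ereal (inner (sor_T A b \<phi> \<omega> \<theta> y - x) (sor_C A \<omega> \<theta> *v (sor_T A b \<phi> \<omega> \<theta> y - y))
        - 1/2 * inner (x - sor_T A b \<phi> \<omega> \<theta> y) (A *v (x - sor_T A b \<phi> \<omega> \<theta> y)))"
    using obj_f_subgradient_bound[OF sym proper w, of b x] by simp
qed

end
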